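(* Let $q$ be an indeterminate and let $\mathbf{Sym}(A)$ be the algebra of noncommutative symmetric functions over $\mathbb{C}(q)$ with generators $S_n=S_n(A)$, $S_0=1$. Define $f_0=1$ and, for $n\ge1$, $f_n\in\mathbf{Sym}(A)$ by $$f_n=\sum_{k+l=n} q^k f_k\, S_l((k+1)A),\quad\text{i.e.}\quad (1-q^n)f_n=\sum_{k=0}^{n-1}q^k f_k\,S_{n-k}((k+1)A).$$ Let $L$ be the linear endomorphism of $\mathbf{Sym}(A)$ defined on the basis $S^I$ by $$L(S^I)=S_{i_1}(A)\,S_{i_2}((i_1+1)A)\,S_{i_3}((i_1+i_2+1)A)\cdots S_{i_r}((i_1+\cdots+i_{r-1}+1)A).$$ Then for every $n\ge1$, $$f_n=\sum_{I\vDash n}\frac{q^{\mathrm{maj}(I)}}{(1-q^{i_1})(1-q^{i_1+i_2})\cdots(1-q^{i_1+\cdots+i_r})}\,L(S^I),$$ where the sum runs over compositions $I=(i_1,\dots,i_r)$ of $n$; equivalently $f_n=L\big(S_n(A/(1-q))\big)$.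
   Context: For $m\ge1$, $S_l(mA)$ denotes the coefficient of $t^l$ in $\big(\sum_{k\ge0}S_k t^k\big)^m$. For a composition $I=(i_1,\dots,i_r)$, $S^I=S_{i_1}\cdots S_{i_r}$ and $\mathrm{maj}(I)=(r-1)i_1+(r-2)i_2+\cdots+i_{r-1}$ (the sum of the elements of the descent set $\{i_1,i_1+i_2,\dots,i_1+\cdots+i_{r-1}\}$). The notation $S_n(A/(1-q))$ stands for $\sum_{I\vDash n}\frac{q^{\mathrm{maj}(I)}}{\prod_{k=1}^r(1-q^{i_1+\cdots+i_k})}S^I$. *)

theory Defs
  imports Complex_Main "HOL-Computational_Algebra.Polynomial" "HOL-Computational_Algebra.Fraction_Field"
begin

type_synonym Cq = "complex poly fract"

definition qX :: Cq where "qX = Fract [:0, 1:] 1"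

text \<open>Noncommutative symmetric functions over C(q): an element is given by its coefficient
  function on the basis S^I, I ranging over compositions (lists of positive integers).
  Coefficients on lists containing 0 are never used (all elements below vanish there).\<close>
type_synonym nsym = "nat list \<Rightarrow> Cq"

definition nsym_one :: nsym where "nsym_one = (\<lambda>I. if I = [] then 1 else 0)"
definition nsym_zero :: nsym where "nsym_zero = (\<lambda>I. 0)"
definition nsym_add :: "nsym \<Rightarrow> nsym \<Rightarrow> nsym" where
  "nsym_add a b = (\<lambda>I. a I + b I)"
definition nsym_smult :: "Cq \<Rightarrow> nsym \<Rightarrow> nsym" where
  "nsym_smult c a = (\<lambda>I. c * a I)"
text \<open>Product: S^J S^K = S^(J@K), extended bilinearly.\<close>
definition nsym_mult :: "nsym \<Rightarrow> nsym \<Rightarrow> nsym" where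
  "nsym_mult a b = (\<lambda>I. \<Sum>k\<le>length I. a (take k I) * b (drop k I))"
definition nsym_sum :: "('i \<Rightarrow> nsym) \<Rightarrow> 'i set \<Rightarrow> nsym" where
  "nsym_sum f X = (\<lambda>I. \<Sum>x\<in>X. f x I)"

definition nsym_S :: "nat \<Rightarrow> nsym" where
  "nsym_S n = (if n = 0 then nsym_one else (\<lambda>I. if I = [n] then 1 else 0))"

text \<open>S_l(mA): coefficient of t^l in (sum_k S_k t^k)^m.\<close>
fun S_mult :: "nat \<Rightarrow> nat \<Rightarrow> nsym" where
  "S_mult 0 l = (if l = 0 then nsym_one else nsym_zero)"
| "S_mult (Suc m) l = nsym_sum (\<lambda>k. nsym_mult (nsym_S k) (S_mult m (l - k))) {..l}"

definition compositions :: "nat \<Rightarrow> nat list set" where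
  "compositions n = {I. (\<forall>i\<in>set I. 0 < i) \<and> sum_list I = n}"

text \<open>maj(I) = (r-1) i_1 + ... + i_{r-1} = sum of the partial sums i_1+...+i_j, j = 1..r-1.\<close>
definition maj :: "nat list \<Rightarrow> nat" where
  "maj I = (\<Sum>j=1..<length I. sum_list (take j I))"

text \<open>L(S^I) = S_{i_1}(A) S_{i_2}((i_1+1)A) ... S_{i_r}((i_1+...+i_{r-1}+1)A);
  L_word c I is this with all offsets shifted by c, so L(S^I) = L_word 0 I.\<close>
fun L_word :: "nat \<Rightarrow> nat list \<Rightarrow> nsym" where
  "L_word c [] = nsym_one"
| "L_word c (i # I) = nsym_mult (S_mult (c + 1) i) (L_word (c + i) I)"

definition comp_coeff :: "nat list \<Rightarrow> Cq" where
  "comp_coeff I = qX ^ maj I / (\<Prod>k=1..length I. (1 - qX ^ sum_list (take k I)))"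

end

theory Submission
  imports Defs
begin

text \<open>Write a composition of \<open>n\<close> as \<open>J @ [n - k]\<close> with \<open>J\<close> a composition of some \<open>k < n\<close>.
  Then \<open>L(S^(J @ [n - k])) = L(S^J) S_(n-k)((k+1)A)\<close>, and the coefficients satisfy
  \<open>(1 - q^n) c(J @ [n - k]) = q^k c(J)\<close> because the new last partial sum is \<open>n\<close> and maj grows by \<open>k\<close>.
  So the right-hand side obeys the same recursion as \<open>f\<close>, whose solution is unique since
  \<open>1 - q^n \<noteq> 0\<close> in \<open>\<complex>(q)\<close>.\<close>

lemma nsym_mult_assoc: "nsym_mult (nsym_mult a b) c = nsym_mult a (nsym_mult b c)"
proof
  fix I :: "nat list"
  define n where "n = length I"
  define g where "g = (\<lambda>i m. a (take i I) * b (take m (drop i I)) * c (drop (i + m) I))"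
  have lhs: "nsym_mult (nsym_mult a b) c I = (\<Sum>k\<le>n. \<Sum>i\<le>k. g i (k - i))"
    unfolding nsym_mult_def g_def n_def
    by (auto simp: sum_distrib_right min_def drop_take intro!: sum.cong)
  have rhs: "nsym_mult a (nsym_mult b c) I = (\<Sum>i\<le>n. \<Sum>m\<le>n - i. g i m)"
    unfolding nsym_mult_def g_def n_def
    by (auto simp: sum_distrib_left mult.assoc add.commute intro!: sum.cong)
  have "{(i, j). i + j \<le> n} = Sigma {..n} (\<lambda>i. {..n - i})" by auto
  then have "(\<Sum>i\<le>n. \<Sum>m\<le>n - i. g i m) = (\<Sum>(i, j)\<in>{(i, j). i + j \<le> n}. g i j)"
    by (simp add: sum.Sigma)
  also have "\<dots> = (\<Sum>k\<le>n. \<Sum>i\<le>k. g i (k - i))"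
    by (rule sum.triangle_reindex_eq)
  finally show "nsym_mult (nsym_mult a b) c I = nsym_mult a (nsym_mult b c) I"
    using lhs rhs by simp
qed

lemma nsym_mult_one_left [simp]: "nsym_mult nsym_one a = a"
proof
  fix I :: "nat list"
  have "nsym_mult nsym_one a I = (\<Sum>k\<le>length I. if k = 0 then a I else 0)"
    unfolding nsym_mult_def nsym_one_def by (intro sum.cong) auto
  then show "nsym_mult nsym_one a I = a I" by simp
qed

lemma nsym_mult_one_right [simp]: "nsym_mult a nsym_one = a"
proof
  fix I :: "nat list"
  have "nsym_mult a nsym_one I = (\<Sum>k\<le>length I. if k = length I then a I else 0)"
    unfolding nsym_mult_def nsym_one_def by (intro sum.cong) auto
  then show "nsym_mult a nsym_one I = a I" by simp
qed

lemma nsym_mult_sum_left: "nsym_mult (nsym_sum F X) b = nsym_sum (\<lambda>x. nsym_mult (F x) b) X"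
  unfolding nsym_mult_def nsym_sum_def by (auto simp: sum_distrib_right intro: sum.swap)

lemma nsym_mult_smult_left: "nsym_mult (nsym_smult c a) b = nsym_smult c (nsym_mult a b)"
  unfolding nsym_mult_def nsym_smult_def by (auto simp: sum_distrib_left mult.assoc)

lemma nsym_smult_cancel:
  assumes "c \<noteq> 0" "nsym_smult c a = nsym_smult c b" shows "a = b"
proof
  fix I
  from assms(2) have "c * a I = c * b I" by (metis nsym_smult_def)
  with assms(1) show "a I = b I" by simp
qed

lemma L_word_snoc: "L_word c (J @ [l]) = nsym_mult (L_word c J) (S_mult (c + sum_list J + 1) l)"
  by (induction J arbitrary: c) (simp_all add: nsym_mult_assoc add.assoc)

lemma one_minus_qX_power_nonzero:
  assumes "n \<ge> 1" shows "1 - qX ^ n \<noteq> 0"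
proof
  have "qX ^ n = Fract ([:0, 1:] ^ n) 1"
    by (induction n) (simp_all add: qX_def One_fract_def)
  moreover assume "1 - qX ^ n = 0"
  ultimately have "Fract ([:0, 1:] ^ n) 1 = Fract (1 :: complex poly) 1"
    by (simp add: One_fract_def[symmetric])
  then have "[:0, 1:] ^ n = (1 :: complex poly)"
    by (simp add: eq_fract)
  then have "degree ([:0, 1 :: complex:] ^ n) = 0" by simp
  then show False using assms by (simp add: degree_power_eq)
qed

lemma length_le_sum_list: "\<forall>i\<in>set I. 0 < i \<Longrightarrow> length I \<le> sum_list (I :: nat list)"
  by (induction I) auto

lemma finite_compositions: "finite (compositions n)"
proof (rule finite_subset)
  show "compositions n \<subseteq> {I. set I \<subseteq> {..n} \<and> length I \<le> n}"
  proof
    fix I assume "I \<in> compositions n"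
    then have "\<forall>i\<in>set I. 0 < i" "sum_list I = n" by (auto simp: compositions_def)
    then show "I \<in> {I. set I \<subseteq> {..n} \<and> length I \<le> n}"
      using member_le_sum_list[of _ I] length_le_sum_list[of I] by auto
  qed
  show "finite {I. set I \<subseteq> {..n} \<and> length I \<le> n}"
    by (rule finite_lists_length_le) simp
qed

lemma compositions_0: "compositions 0 = {[]}"
proof -
  have "I = []" if "I \<in> compositions 0" for I
  proof -
    from that have "\<forall>i\<in>set I. 0 < i" "sum_list I = 0" by (auto simp: compositions_def)
    with length_le_sum_list[of I] show "I = []" by simp
  qed
  then show ?thesis by (auto simp: compositions_def)
qed

lemma compositions_snoc_cases:
  assumes "I \<in> compositions n" "n \<ge> 1"
  obtains J l where "I = J @ [l]" "0 < l" "l \<le> n" "J \<in> compositions (n - l)"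
proof -
  from assms have "I \<noteq> []" by (auto simp: compositions_def)
  then obtain J l where I: "I = J @ [l]" by (cases I rule: rev_exhaust) auto
  with assms(1) have "0 < l" "\<forall>i\<in>set J. 0 < i" "sum_list J + l = n"
    by (auto simp: compositions_def)
  with I that show ?thesis by (auto simp: compositions_def)
qed

lemma bij_betw_compositions_snoc:
  assumes "n \<ge> 1"
  shows "bij_betw (\<lambda>(k, J). J @ [n - k]) (Sigma {..<n} compositions) (compositions n)"
proof (rule bij_betw_byWitness[where f' = "\<lambda>I. (n - last I, butlast I)"])
  show "\<forall>x\<in>Sigma {..<n} compositions. (\<lambda>I. (n - last I, butlast I)) ((\<lambda>(k, J). J @ [n - k]) x) = x"
    by (auto simp: compositions_def)
  show "(\<lambda>(k, J). J @ [n - k]) ` Sigma {..<n} compositions \<subseteq> compositions n"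
    by (auto simp: compositions_def)
  show "\<forall>I\<in>compositions n. (\<lambda>(k, J). J @ [n - k]) (n - last I, butlast I) = I"
  proof
    fix I assume "I \<in> compositions n"
    then obtain J l where "I = J @ [l]" "l \<le> n"
      by (rule compositions_snoc_cases[OF _ assms])
    then show "(\<lambda>(k, J). J @ [n - k]) (n - last I, butlast I) = I" by simp
  qed
  show "(\<lambda>I. (n - last I, butlast I)) ` compositions n \<subseteq> Sigma {..<n} compositions"
  proof
    fix x assume "x \<in> (\<lambda>I. (n - last I, butlast I)) ` compositions n"
    then obtain I where I: "I \<in> compositions n" and x: "x = (n - last I, butlast I)" by blast
    from I obtain J l where "I = J @ [l]" "0 < l" "l \<le> n" "J \<in> compositions (n - l)"
      by (rule compositions_snoc_cases[OF _ assms])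
    with x show "x \<in> Sigma {..<n} compositions" by simp
  qed
qed

lemma sum_compositions_snoc:
  assumes "n \<ge> 1"
  shows "(\<Sum>I\<in>compositions n. F I) = (\<Sum>k<n. \<Sum>J\<in>compositions k. F (J @ [n - k]))"
proof -
  have "(\<Sum>I\<in>compositions n. F I) = (\<Sum>(k, J)\<in>Sigma {..<n} compositions. F (J @ [n - k]))"
    using sum.reindex_bij_betw[OF bij_betw_compositions_snoc[OF assms], of F]
    by (simp add: case_prod_unfold)
  also have "\<dots> = (\<Sum>k<n. \<Sum>J\<in>compositions k. F (J @ [n - k]))"
    by (simp add: sum.Sigma finite_compositions)
  finally show ?thesis .
qed

lemma maj_snoc: "maj (J @ [l]) = maj J + sum_list J"
proof (cases "J = []")
  case True
  then show ?thesis by (simp add: maj_def)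
next
  case False
  then have "1 \<le> length J" by (simp add: Suc_leI)
  then have "maj (J @ [l]) = (\<Sum>j=1..<length J. sum_list (take j (J @ [l]))) + sum_list J"
    by (simp add: maj_def sum.atLeastLessThan_Suc)
  also have "(\<Sum>j=1..<length J. sum_list (take j (J @ [l]))) = maj J"
    unfolding maj_def by (intro sum.cong) auto
  finally show ?thesis .
qed

lemma comp_coeff_snoc:
  assumes "sum_list J + l \<ge> 1"
  shows "(1 - qX ^ (sum_list J + l)) * comp_coeff (J @ [l]) = qX ^ sum_list J * comp_coeff J"
proof -
  have "(\<Prod>k=1..length J. 1 - qX ^ sum_list (take k (J @ [l])))
      = (\<Prod>k=1..length J. 1 - qX ^ sum_list (take k J))"
    by (intro prod.cong) auto
  then have prod_snoc: "(\<Prod>k=1..length (J @ [l]). 1 - qX ^ sum_list (take k (J @ [l])))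
      = (\<Prod>k=1..length J. 1 - qX ^ sum_list (take k J)) * (1 - qX ^ (sum_list J + l))"
    by (simp add: prod.cl_ivl_Suc)
  show ?thesis
    using one_minus_qX_power_nonzero[OF assms]
    by (simp add: comp_coeff_def maj_snoc prod_snoc power_add)
qed

definition q_recursion_rhs :: "(nat \<Rightarrow> nsym) \<Rightarrow> nat \<Rightarrow> nsym" where
  "q_recursion_rhs h n =
     nsym_sum (\<lambda>k. nsym_smult (qX ^ k) (nsym_mult (h k) (S_mult (k + 1) (n - k)))) {..<n}"

definition comp_expansion :: "nat \<Rightarrow> nsym" where
  "comp_expansion n = nsym_sum (\<lambda>I. nsym_smult (comp_coeff I) (L_word 0 I)) (compositions n)"

lemma comp_expansion_0: "comp_expansion 0 = nsym_one"
  by (auto simp: comp_expansion_def compositions_0 nsym_sum_def nsym_smult_def comp_coeff_def maj_def)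

lemma comp_expansion_recursion:
  assumes "n \<ge> 1"
  shows "nsym_smult (1 - qX ^ n) (comp_expansion n) = q_recursion_rhs comp_expansion n"
proof
  fix I
  let ?F = "\<lambda>J. (1 - qX ^ n) * (comp_coeff J * L_word 0 J I)"
  have "nsym_smult (1 - qX ^ n) (comp_expansion n) I = (\<Sum>J\<in>compositions n. ?F J)"
    by (simp add: comp_expansion_def nsym_smult_def nsym_sum_def sum_distrib_left)
  also have "\<dots> = (\<Sum>k<n. \<Sum>J\<in>compositions k. ?F (J @ [n - k]))"
    by (rule sum_compositions_snoc[OF assms])
  also have "\<dots> = (\<Sum>k<n. \<Sum>J\<in>compositions k.
      qX ^ k * (comp_coeff J * nsym_mult (L_word 0 J) (S_mult (k + 1) (n - k)) I))"
  proof (intro sum.cong refl)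
    fix k J assume "k \<in> {..<n}" "J \<in> compositions k"
    then have "k < n" "sum_list J = k" by (auto simp: compositions_def)
    with comp_coeff_snoc[of J "n - k"]
    have coeff: "(1 - qX ^ n) * comp_coeff (J @ [n - k]) = qX ^ k * comp_coeff J" by simp
    have word: "L_word 0 (J @ [n - k]) = nsym_mult (L_word 0 J) (S_mult (k + 1) (n - k))"
      \<comment> \<open>plain \<open>simp\<close> would turn \<open>k + 1\<close> into \<open>Suc k\<close> and unfold \<open>S_mult\<close> without end\<close>
      using \<open>sum_list J = k\<close> by (simp only: L_word_snoc add_0)
    have "?F (J @ [n - k]) = ((1 - qX ^ n) * comp_coeff (J @ [n - k])) * L_word 0 (J @ [n - k]) I"
      by (simp only: mult.assoc)
    also have "\<dots> = qX ^ k * comp_coeff J * nsym_mult (L_word 0 J) (S_mult (k + 1) (n - k)) I"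
      unfolding coeff word ..
    finally show "?F (J @ [n - k]) =
        qX ^ k * (comp_coeff J * nsym_mult (L_word 0 J) (S_mult (k + 1) (n - k)) I)"
      by (simp only: mult.assoc)
  qed
  also have "\<dots> = q_recursion_rhs comp_expansion n I"
    unfolding q_recursion_rhs_def comp_expansion_def nsym_mult_sum_left nsym_mult_smult_left
    by (simp only: nsym_sum_def nsym_smult_def sum_distrib_left)
  finally show "nsym_smult (1 - qX ^ n) (comp_expansion n) I = q_recursion_rhs comp_expansion n I" .
qed

lemma q_recursion_unique:
  assumes "f 0 = g 0"
    and f: "\<And>n. n \<ge> 1 \<Longrightarrow> nsym_smult (1 - qX ^ n) (f n) = q_recursion_rhs f n"
    and g: "\<And>n. n \<ge> 1 \<Longrightarrow> nsym_smult (1 - qX ^ n) (g n) = q_recursion_rhs g n"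
  shows "f n = g n"
proof (induction n rule: less_induct)
  case (less n)
  show ?case
  proof (cases "n = 0")
    case True
    with assms(1) show ?thesis by simp
  next
    case False
    then have "n \<ge> 1" by simp
    from less have "q_recursion_rhs f n = q_recursion_rhs g n"
      by (simp add: q_recursion_rhs_def nsym_sum_def)
    with f g \<open>n \<ge> 1\<close>
    have "nsym_smult (1 - qX ^ n) (f n) = nsym_smult (1 - qX ^ n) (g n)" by simp
    with one_minus_qX_power_nonzero[OF \<open>n \<ge> 1\<close>] show ?thesis
      by (rule nsym_smult_cancel)
  qed
qed

theorem mainTheorem6:
  fixes f :: "nat \<Rightarrow> nsym"
  assumes f0: "f 0 = nsym_one"
    and frec: "\<And>n. n \<ge> 1 \<Longrightarrow>
      nsym_smult (1 - qX ^ n) (f n) =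
        nsym_sum (\<lambda>k. nsym_smult (qX ^ k) (nsym_mult (f k) (S_mult (k + 1) (n - k)))) {..<n}"
    and n: "n \<ge> 1"
  shows "f n = nsym_sum (\<lambda>I. nsym_smult (comp_coeff I) (L_word 0 I)) (compositions n)"
proof -
  have "f n = comp_expansion n"
  proof (rule q_recursion_unique)
    show "f 0 = comp_expansion 0" using f0 comp_expansion_0 by simp
    show "nsym_smult (1 - qX ^ m) (f m) = q_recursion_rhs f m" if "m \<ge> 1" for m
      using frec[OF that] by (simp add: q_recursion_rhs_def)
  qed (rule comp_expansion_recursion)
  then show ?thesis by (simp add: comp_expansion_def)
qed

end
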